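(* For every $n,e\in\mathbb N$, consider the following code for single-bit messages on two shares $A,B$ of $n$ qubits each: $\mathrm{Enc}(0)=|\Phi\rangle\langle\Phi|^{\otimes n}_{AB}$ ($n$ EPR pairs), and $\mathrm{Enc}(1)$ is obtained by sampling $(a,b)\in\mathbb F_2^n\times\mathbb F_2^n$ uniformly conditioned on $(a,b)\neq(0^n,0^n)$ and outputting $(X^a\otimes Z^b)|\Phi\rangle^{\otimes n}$ (with $X^a$ on $A$ and $Z^b$ on $B$). $\mathrm{Dec}$ measures each of the $n$ pairs in the Bell basis, obtaining $a',b'\in\{0,1\}^n$, and outputs $0$ iff $a'=b'=0^n$, else $1$. This code is perfectly correct and is non-malleable against $\mathsf{LOCC}^2_e$ with error $2^{1+e-n}$.
   Context: For $a\in\mathbb F_2^n$, $X^a=\bigotimes_iX^{a_i}$ and $Z^a=\bigotimes_iZ^{a_i}$ are $n$-qubit Pauli operators. $\mathsf{LOCC}^2_e$ is the set of bipartite channels implementable by two parties holding the two shares using local quantum operations and unbounded classical communication, assisted by a pre-shared entangled state of at most $e$ qubits (Schmidt number at most $2^e$). A code for classical messages with quantum codewords is non-malleable against a class $\mathcal F$ of channels with error $\varepsilon$ if for every $\Lambda\in\mathcal F$ there are $p_\Lambda\in[0,1]$ and a distribution $D_\Lambda$ on messages, independent of the message, such that for every message $m$ the output distribution of $\mathrm{Dec}\circ\Lambda\circ\mathrm{Enc}(m)$ is within statistical distance $\varepsilon$ of $p_\Lambda\cdot m+(1-p_\Lambda)\cdot D_\Lambda$. *)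

theory Defs
  imports Complex_Main
begin

(* Finite-dimensional operators are represented as functions on index pairs.
   A bipartite system A (x) B with local dimensions dA, dB has basis |i>|j>,
   i < dA, j < dB; an operator on it is a function (i,j) (i',j') -> complex
   (row (i,j), column (i',j')).  Entries outside the range are ignored/zero. *)
type_synonym bop = "nat \<times> nat \<Rightarrow> nat \<times> nat \<Rightarrow> complex"
type_synonym kmat = "nat \<Rightarrow> nat \<Rightarrow> complex"
type_synonym bvec = "nat \<times> nat \<Rightarrow> complex"

(* n-qubit computational basis states are indexed by x < 2^n, bit i of x = qubit i.
   Vectors a in F_2^n are likewise encoded as naturals a < 2^n. *)

definition pauliX :: "nat \<Rightarrow> nat \<Rightarrow> kmat" where
  "pauliX n a x u = (if x < 2^n \<and> u < 2^n \<and> x = xor u a then 1 else 0)"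

definition pauliZ :: "nat \<Rightarrow> nat \<Rightarrow> kmat" where
  "pauliZ n b y u = (if y < 2^n \<and> y = u
      then (-1) ^ card {i. i < n \<and> bit b i \<and> bit u i} else 0)"

(* |Phi>^{(x) n} = 2^{-n/2} sum_x |x>_A |x>_B  (qubit i of A paired with qubit i of B) *)
definition epr_n :: "nat \<Rightarrow> bvec" where
  "epr_n n = (\<lambda>(x, y). if x < 2^n \<and> x = y
       then 1 / complex_of_real (sqrt (2^n)) else 0)"

definition bell :: "nat \<Rightarrow> nat \<Rightarrow> nat \<Rightarrow> bvec" where
  "bell n a b = (\<lambda>(x, y). \<Sum>u<2^n. \<Sum>v<2^n. pauliX n a x u * pauliZ n b y v * epr_n n (u, v))"

definition proj :: "bvec \<Rightarrow> bop" where
  "proj v p q = v p * cnj (v q)"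

definition nz_pairs :: "nat \<Rightarrow> (nat \<times> nat) set" where
  "nz_pairs n = ({..<2^n} \<times> {..<2^n}) - {(0, 0)}"

(* messages: False = 0, True = 1 *)
definition enc :: "nat \<Rightarrow> bool \<Rightarrow> bop" where
  "enc n m = (if m
     then (\<lambda>p q. (\<Sum>(a, b)\<in>nz_pairs n. proj (bell n a b) p q) / of_nat (card (nz_pairs n)))
     else proj (epr_n n))"

definition bellprob :: "nat \<Rightarrow> bop \<Rightarrow> nat \<Rightarrow> nat \<Rightarrow> real" where
  "bellprob n \<sigma> a b = Re (\<Sum>p\<in>{..<2^n} \<times> {..<2^n}. \<Sum>q\<in>{..<2^n} \<times> {..<2^n}.
       cnj (bell n a b p) * \<sigma> p q * bell n a b q)"

definition dec_dist :: "nat \<Rightarrow> bop \<Rightarrow> bool \<Rightarrow> real" where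
  "dec_dist n \<sigma> m = (if m then (\<Sum>(a, b)\<in>nz_pairs n. bellprob n \<sigma> a b) else bellprob n \<sigma> 0 0)"

definition apply_krausA :: "kmat list \<Rightarrow> nat \<Rightarrow> nat \<Rightarrow> nat \<Rightarrow> bop \<Rightarrow> bop" where
  "apply_krausA Ks dA dA' dB \<rho> = (\<lambda>(i, j) (i', j').
     if i < dA' \<and> i' < dA' \<and> j < dB \<and> j' < dB
     then (\<Sum>K\<leftarrow>Ks. \<Sum>x<dA. \<Sum>y<dA. K i x * \<rho> (x, j) (y, j') * cnj (K i' y))
     else 0)"

definition apply_krausB :: "kmat list \<Rightarrow> nat \<Rightarrow> nat \<Rightarrow> nat \<Rightarrow> bop \<Rightarrow> bop" where
  "apply_krausB Ks dA dB dB' \<rho> = (\<lambda>(i, j) (i', j').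
     if i < dA \<and> i' < dA \<and> j < dB' \<and> j' < dB'
     then (\<Sum>K\<leftarrow>Ks. \<Sum>x<dB. \<Sum>y<dB. K j x * \<rho> (i, x) (i', y) * cnj (K j' y))
     else 0)"

(* a quantum instrument from dimension d to d': finitely many CP maps (Kraus lists),
   jointly trace preserving: sum_k sum_{K in I!k} K^* K = Id *)
definition instrument :: "kmat list list \<Rightarrow> nat \<Rightarrow> nat \<Rightarrow> bool" where
  "instrument I d d' \<longleftrightarrow> (\<forall>x<d. \<forall>y<d.
     (\<Sum>Ks\<leftarrow>I. \<Sum>K\<leftarrow>Ks. \<Sum>i<d'. cnj (K i x) * K i y) = (if x = y then 1 else 0))"

(* finite-round LOCC channels from dims (dA,dB) to (dA',dB'): in each round one party
   applies a local instrument, broadcasts the outcome, and the rest of the protocol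
   depends on it. *)
inductive locc :: "nat \<Rightarrow> nat \<Rightarrow> nat \<Rightarrow> nat \<Rightarrow> (bop \<Rightarrow> bop) \<Rightarrow> bool" where
  locc_id: "locc dA dB dA dB (\<lambda>\<rho>. \<rho>)"
| locc_A: "instrument I dA dA'' \<Longrightarrow> (\<forall>k<length I. locc dA'' dB dA' dB' (\<Phi> k)) \<Longrightarrow>
     locc dA dB dA' dB' (\<lambda>\<rho> p q. \<Sum>k<length I. \<Phi> k (apply_krausA (I ! k) dA dA'' dB \<rho>) p q)"
| locc_B: "instrument I dB dB'' \<Longrightarrow> (\<forall>k<length I. locc dA dB'' dA' dB' (\<Phi> k)) \<Longrightarrow>
     locc dA dB dA' dB' (\<lambda>\<rho> p q. \<Sum>k<length I. \<Phi> k (apply_krausB (I ! k) dA dB dB'' \<rho>) p q)"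

definition schmidt_rank_le :: "nat \<Rightarrow> nat \<Rightarrow> nat \<Rightarrow> bvec \<Rightarrow> bool" where
  "schmidt_rank_le k dA dB \<psi> \<longleftrightarrow>
     (\<exists>u v. \<forall>x<dA. \<forall>y<dB. \<psi> (x, y) = (\<Sum>l<k. u l x * v l y))"

(* a shared state on E_A (x) E_B of Schmidt number at most 2^e:
   a convex combination of pure states of Schmidt rank at most 2^e *)
definition resource_state :: "nat \<Rightarrow> nat \<Rightarrow> nat \<Rightarrow> bop \<Rightarrow> bool" where
  "resource_state e dA dB \<omega> \<longleftrightarrow> (\<exists>J (w :: nat \<Rightarrow> real) \<psi>.
     (\<forall>j<J. w j \<ge> 0) \<and> (\<Sum>j<J. w j) = 1 \<and>
     (\<forall>j<J. (\<Sum>x<dA. \<Sum>y<dB. (cmod (\<psi> j (x, y)))\<^sup>2) = 1 \<and> schmidt_rank_le (2^e) dA dB (\<psi> j)) \<and>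
     (\<forall>p q. \<omega> p q = (\<Sum>j<J. complex_of_real (w j) * proj (\<psi> j) p q)))"

(* rho on A (x) B (n qubits each) tensored with omega on E_A (x) E_B, regrouped as
   (A E_A) (x) (B E_B), index of A E_A is a * dEA + ea *)
definition attach :: "nat \<Rightarrow> nat \<Rightarrow> nat \<Rightarrow> bop \<Rightarrow> bop \<Rightarrow> bop" where
  "attach n dEA dEB \<omega> \<rho> = (\<lambda>(i, j) (i', j').
     if i < 2^n * dEA \<and> i' < 2^n * dEA \<and> j < 2^n * dEB \<and> j' < 2^n * dEB
     then \<rho> (i div dEA, j div dEB) (i' div dEA, j' div dEB)
          * \<omega> (i mod dEA, j mod dEB) (i' mod dEA, j' mod dEB)
     else 0)"

definition LOCC2 :: "nat \<Rightarrow> nat \<Rightarrow> (bop \<Rightarrow> bop) set" where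
  "LOCC2 n e = {\<Lambda>. \<exists>dEA dEB \<omega> \<Phi>. resource_state e dEA dEB \<omega> \<and>
      locc (2^n * dEA) (2^n * dEB) (2^n) (2^n) \<Phi> \<and>
      \<Lambda> = (\<lambda>\<rho>. \<Phi> (attach n dEA dEB \<omega> \<rho>))}"

definition is_dist :: "(bool \<Rightarrow> real) \<Rightarrow> bool" where
  "is_dist D \<longleftrightarrow> (\<forall>x. D x \<ge> 0) \<and> D False + D True = 1"

definition stat_dist :: "(bool \<Rightarrow> real) \<Rightarrow> (bool \<Rightarrow> real) \<Rightarrow> real" where
  "stat_dist P Q = (\<bar>P False - Q False\<bar> + \<bar>P True - Q True\<bar>) / 2"

definition non_malleable :: "nat \<Rightarrow> (bop \<Rightarrow> bop) set \<Rightarrow> real \<Rightarrow> bool" where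
  "non_malleable n F \<epsilon> \<longleftrightarrow> (\<forall>\<Lambda>\<in>F. \<exists>p D. 0 \<le> p \<and> p \<le> 1 \<and> is_dist D \<and>
     (\<forall>m. stat_dist (dec_dist n (\<Lambda> (enc n m)))
                     (\<lambda>x. p * (if x = m then 1 else 0) + (1 - p) * D x) \<le> \<epsilon>))"

definition perfectly_correct :: "nat \<Rightarrow> bool" where
  "perfectly_correct n \<longleftrightarrow> (\<forall>m. dec_dist n (enc n m) = (\<lambda>x. if x = m then 1 else 0))"

end

theory Submission
  imports Defs "HOL-Analysis.Analysis"
begin

text \<open>
  Correctness holds because the \<open>4\<^sup>n\<close> states \<open>(X\<^sup>a \<otimes> Z\<^sup>b)|\<Phi>\<rangle>\<^sup>\<otimes>\<^sup>n\<close> form an orthonormal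
  basis, which is exactly the one the decoder measures.

  For security, let \<open>\<Lambda>\<close> be an LOCC channel assisted by a state of Schmidt number \<open>2\<^sup>e\<close>.
  Applied to a product input \<open>|x\<rangle>|y\<rangle>\<close>, \<open>\<Lambda>\<close> outputs a mixture of vectors of Schmidt rank
  at most \<open>2\<^sup>e\<close>, and such a vector \<open>\<psi>\<close> satisfies \<open>|\<langle>\<Phi>\<^sup>\<otimes>\<^sup>n|\<psi>\<rangle>|\<^sup>2 \<le> 2\<^sup>e/2\<^sup>n \<parallel>\<psi>\<parallel>\<^sup>2\<close>.
  The Bell projectors and the product projectors both sum to the identity, so by linearity
  the probability of decoding \<open>0\<close>, summed over all \<open>4\<^sup>n\<close> Bell inputs, is at most
  \<open>4\<^sup>n \<sdot> 2\<^sup>e/2\<^sup>n\<close>. Hence \<open>Enc(1)\<close> is tampered into a \<open>0\<close> with probability at most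
  \<open>2\<^sup>n\<^sup>+\<^sup>e/(4\<^sup>n - 1) \<le> 2\<^sup>1\<^sup>+\<^sup>e\<^sup>-\<^sup>n\<close>, and a binary channel with \<open>Pr[1 \<mapsto> 0] \<le> \<epsilon>\<close> is
  \<open>\<epsilon>\<close>-close to "keep the message with probability \<open>p\<close>, otherwise sample from \<open>D\<close>".
\<close>

section \<open>Characters of \<open>\<bbbF>\<^sub>2\<^sup>n\<close>\<close>

lemma xor_less_pow2: "(x::nat) < 2^n \<Longrightarrow> y < 2^n \<Longrightarrow> xor x y < 2^n"
  by (metis take_bit_nat_eq_self_iff take_bit_xor)

lemma xor_cancel_left [simp]: "xor y (xor y a) = (a::nat)"
  by (simp flip: xor.assoc)

lemma xor_left_inject [simp]: "xor y a = xor y a' \<longleftrightarrow> a = (a'::nat)"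
  by (metis xor_cancel_left)

lemma xor_eq_0_iff: "xor b b' = 0 \<longleftrightarrow> b = (b'::nat)"
  by (metis xor_left_inject xor_self_eq)

definition walsh :: "nat \<Rightarrow> nat \<Rightarrow> nat \<Rightarrow> complex" where
  "walsh n b y = (-1) ^ card {i. i < n \<and> bit b i \<and> bit y i}"

lemma walsh_commute: "walsh n b y = walsh n y b"
  unfolding walsh_def by (metis (no_types, lifting) Collect_cong)

lemma walsh_0_left [simp]: "walsh n 0 y = 1"
  by (simp add: walsh_def)

lemma cnj_walsh [simp]: "cnj (walsh n b y) = walsh n b y"
  by (simp add: walsh_def)

lemma walsh_mult_xor: "walsh n b y * walsh n b y' = walsh n b (xor y y')"
proof -
  let ?A = "{i. i < n \<and> bit b i \<and> bit y i}"
  let ?B = "{i. i < n \<and> bit b i \<and> bit y' i}"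
  let ?C = "{i. i < n \<and> bit b i \<and> bit (xor y y') i}"
  have "?C = (?A \<union> ?B) - (?A \<inter> ?B)" by (auto simp: bit_xor_iff)
  moreover have "(?A \<union> ?B) \<inter> (?A \<inter> ?B) = ?A \<inter> ?B" by blast
  ultimately have "card (?A \<union> ?B) = card (?A \<inter> ?B) + card ?C"
    using card_Int_Diff[of "?A \<union> ?B" "?A \<inter> ?B"] by simp
  then have "card ?A + card ?B = card ?C + 2 * card (?A \<inter> ?B)"
    using card_Un_Int[of ?A ?B] by simp
  then have "(-1::complex) ^ (card ?A + card ?B) = (-1) ^ card ?C"
    by (simp add: power_add power_mult)
  then show ?thesis unfolding walsh_def by (simp add: power_add)
qed

lemma walsh_sum:
  assumes "c < 2^n"
  shows "(\<Sum>y<2^n. walsh n c y) = (if c = 0 then 2^n else 0)"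
proof (cases "c = 0")
  case False
  then obtain j where j: "bit c j" using bit_eq_iff[of c 0] by auto
  have jn: "j < n"
    using assms j by (metis bit_take_bit_iff take_bit_nat_eq_self_iff)
  have "{i. i < n \<and> bit c i \<and> bit ((2::nat)^j) i} = {j}" using jn j by (auto simp: bit_exp_iff)
  then have "walsh n c (2^j) = -1" by (simp add: walsh_def)
  then have flip: "walsh n c (xor y (2^j)) = - walsh n c y" for y
    by (simp flip: walsh_mult_xor)
  \<comment> \<open>translating by \<open>e\<^sub>j\<close>, where \<open>c\<^sub>j = 1\<close>, negates every term\<close>
  have "(\<Sum>y<2^n. walsh n c y) = (\<Sum>y<2^n. walsh n c (xor y (2^j)))"
    by (rule sum.reindex_bij_witness[of _ "\<lambda>y. xor y (2^j)" "\<lambda>y. xor y (2^j)"])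
      (use jn in \<open>auto simp: xor_less_pow2 xor.assoc\<close>)
  then show ?thesis using False by (simp add: flip sum_negf)
qed simp

lemma walsh_orthogonal:
  assumes "y < 2^n" "y' < 2^n"
  shows "(\<Sum>b<2^n. walsh n b y * walsh n b y') = (if y = y' then 2^n else 0)"
proof -
  have "walsh n b y * walsh n b y' = walsh n (xor y y') b" for b
    unfolding walsh_mult_xor by (rule walsh_commute)
  then show ?thesis using walsh_sum[OF xor_less_pow2[OF assms]] by (simp add: xor_eq_0_iff)
qed

section \<open>The Bell basis\<close>

abbreviation sqrt_dim :: "nat \<Rightarrow> complex" where
  "sqrt_dim n \<equiv> complex_of_real (sqrt (2^n))"

lemma sqrt_dim_mult_self: "sqrt_dim n * sqrt_dim n = 2^n"
  by (simp flip: of_real_mult)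

definition ket_idx :: "nat \<Rightarrow> (nat \<times> nat) set" where
  "ket_idx n = {..<2^n} \<times> {..<2^n}"

lemma finite_ket_idx [simp]: "finite (ket_idx n)"
  by (simp add: ket_idx_def)

lemma card_ket_idx: "card (ket_idx n) = 2^n * 2^n"
  by (simp add: ket_idx_def card_cartesian_product)

lemma sum_ket_idx: "(\<Sum>p\<in>ket_idx n. f p) = (\<Sum>x<2^n. \<Sum>y<2^n. f (x, y))"
  by (simp add: ket_idx_def sum.cartesian_product)

lemma nz_pairs_eq: "nz_pairs n = ket_idx n - {(0, 0)}"
  by (simp add: nz_pairs_def ket_idx_def)

lemma bell_eq:
  "bell n a b (x, y) = (if x < 2^n \<and> y < 2^n \<and> x = xor y a then walsh n b y / sqrt_dim n else 0)"
proof -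
  have "pauliX n a x u * pauliZ n b y v * epr_n n (u, v) = (if v = y then (if u = y then
      (if y < 2^n then pauliX n a x y * walsh n b y / sqrt_dim n else 0) else 0) else 0)" for u v
    by (auto simp: pauliZ_def epr_n_def walsh_def)
  then have "bell n a b (x, y) = (if y < 2^n then pauliX n a x y * walsh n b y / sqrt_dim n else 0)"
    by (simp add: bell_def)
  then show ?thesis by (simp add: pauliX_def)
qed

lemma bell_eq':
  "bell n a b (x, y) = (if x < 2^n \<and> y < 2^n \<and> a = xor y x then walsh n b y / sqrt_dim n else 0)"
  unfolding bell_eq by (auto simp del: xor_left_inject)

lemma epr_n_eq_bell: "epr_n n = bell n 0 0"
  by (auto simp: fun_eq_iff bell_eq epr_n_def)

lemma bell_eq_0: "p \<notin> ket_idx n \<Longrightarrow> bell n a b p = 0"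
  by (cases p) (auto simp: bell_eq ket_idx_def)

definition braket :: "nat \<Rightarrow> bvec \<Rightarrow> bvec \<Rightarrow> complex" where
  "braket n \<phi> \<psi> = (\<Sum>p\<in>ket_idx n. cnj (\<phi> p) * \<psi> p)"

definition sandwich :: "nat \<Rightarrow> bvec \<Rightarrow> bop \<Rightarrow> complex" where
  "sandwich n \<phi> \<sigma> = (\<Sum>p\<in>ket_idx n. \<Sum>q\<in>ket_idx n. cnj (\<phi> p) * \<sigma> p q * \<phi> q)"

lemma bellprob_eq_sandwich: "bellprob n \<sigma> a b = Re (sandwich n (bell n a b) \<sigma>)"
  unfolding bellprob_def sandwich_def ket_idx_def ..

lemma braket_bell:
  assumes "a < 2^n" "a' < 2^n" "b < 2^n" "b' < 2^n"
  shows "braket n (bell n a b) (bell n a' b') = (if a = a' \<and> b = b' then 1 else 0)"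
proof -
  have "braket n (bell n a b) (bell n a' b') =
      (\<Sum>y<2^n. \<Sum>x<2^n. cnj (bell n a b (x, y)) * bell n a' b' (x, y))"
    unfolding braket_def sum_ket_idx by (rule sum.swap)
  also have "\<dots> = (\<Sum>y<2^n. if a = a' then walsh n y b * walsh n y b' / 2^n else 0)"
  proof (intro sum.cong refl)
    fix y assume "y \<in> {..<(2::nat)^n}"
    then have "(\<Sum>x<2^n. cnj (bell n a b (x, y)) * bell n a' b' (x, y)) =
        (\<Sum>x<2^n. if x = xor y a' then cnj (bell n a b (x, y)) * walsh n b' y / sqrt_dim n else 0)"
      by (intro sum.cong refl) (auto simp: bell_eq)
    also have "\<dots> = (if a = a' then walsh n b y * walsh n b' y / (sqrt_dim n * sqrt_dim n) else 0)"
      using \<open>y \<in> _\<close> assms(2) by (auto simp: bell_eq xor_less_pow2 eq_commute[of a])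
    finally show "(\<Sum>x<2^n. cnj (bell n a b (x, y)) * bell n a' b' (x, y)) =
        (if a = a' then walsh n y b * walsh n y b' / 2^n else 0)"
      by (simp add: sqrt_dim_mult_self walsh_commute)
  qed
  also have "\<dots> = (if a = a' \<and> b = b' then 1 else 0)"
    using walsh_orthogonal[OF assms(3,4)] by (cases "a = a'") (auto simp flip: sum_divide_distrib)
  finally show ?thesis .
qed

lemma bell_complete:
  assumes "p \<in> ket_idx n" "q \<in> ket_idx n"
  shows "(\<Sum>a<2^n. \<Sum>b<2^n. bell n a b p * cnj (bell n a b q)) = (if p = q then 1 else 0)"
proof -
  obtain x y x' y' where pq: "p = (x, y)" "q = (x', y')" by (cases p, cases q)
  have r: "x < 2^n" "y < 2^n" "x' < 2^n" "y' < 2^n" using assms pq by (auto simp: ket_idx_def)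
  have "bell n a b p * cnj (bell n a b q) = (if a = xor y x then (if xor y' x' = xor y x
      then walsh n b y * walsh n b y' / (sqrt_dim n * sqrt_dim n) else 0) else 0)" for a b
    using r by (auto simp: pq bell_eq')
  then have "(\<Sum>a<2^n. \<Sum>b<2^n. bell n a b p * cnj (bell n a b q)) =
      (\<Sum>b<2^n. if xor y' x' = xor y x
         then walsh n b y * walsh n b y' / (sqrt_dim n * sqrt_dim n) else 0)"
    using r by (subst sum.swap) (simp add: xor_less_pow2)
  also have "\<dots> = (if xor y' x' = xor y x \<and> y = y' then 1 else 0)"
    using walsh_orthogonal[OF r(2,4)]
    by (cases "y = y'"; cases "xor y' x' = xor y x") (auto simp: sqrt_dim_mult_self simp flip: sum_divide_distrib)
  also have "\<dots> = (if p = q then 1 else 0)"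
    using pq by auto
  finally show ?thesis .
qed

lemma sandwich_proj: "sandwich n \<phi> (proj \<psi>) = braket n \<phi> \<psi> * cnj (braket n \<phi> \<psi>)"
  unfolding sandwich_def proj_def braket_def
  by (simp add: sum_distrib_left sum_distrib_right mult.assoc mult.left_commute mult.commute)

lemma sandwich_sum: "sandwich n \<phi> (\<lambda>p q. \<Sum>i\<in>I. f i p q) = (\<Sum>i\<in>I. sandwich n \<phi> (f i))"
  unfolding sandwich_def by (simp add: sum_distrib_left sum_distrib_right sum.swap[of _ I])

lemma sandwich_divide: "sandwich n \<phi> (\<lambda>p q. \<sigma> p q / c) = sandwich n \<phi> \<sigma> / c"
  unfolding sandwich_def by (simp add: sum_divide_distrib)

section \<open>Correctness\<close>

lemma finite_nz_pairs [simp]: "finite (nz_pairs n)"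
  by (simp add: nz_pairs_def)

lemma card_nz_pairs: "card (nz_pairs n) = 2^n * 2^n - 1"
  by (simp add: nz_pairs_eq card_ket_idx ket_idx_def)

lemma mem_nz_pairs: "(a, b) \<in> nz_pairs n \<longleftrightarrow> a < 2^n \<and> b < 2^n \<and> (a, b) \<noteq> (0, 0)"
  by (auto simp: nz_pairs_def)

lemma card_nz_pairs_pos: "n \<ge> 1 \<Longrightarrow> card (nz_pairs n) > 0"
proof -
  assume "n \<ge> 1"
  then have "(2::nat)^1 \<le> 2^n" by (rule power_increasing) simp
  then have "1 < (2::nat)^n" by simp
  then have "1 < (2::nat)^n * 2^n" using less_1_mult by blast
  then show ?thesis unfolding card_nz_pairs by simp
qed

lemma enc_True_eq: "enc n True =
    (\<lambda>p q. (\<Sum>i\<in>nz_pairs n. proj (bell n (fst i) (snd i)) p q) / of_nat (card (nz_pairs n)))"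
  by (simp add: enc_def case_prod_beta)

lemma bellprob_enc_False:
  "a < 2^n \<Longrightarrow> b < 2^n \<Longrightarrow> bellprob n (enc n False) a b = (if a = 0 \<and> b = 0 then 1 else 0)"
  by (simp add: enc_def bellprob_eq_sandwich sandwich_proj epr_n_eq_bell braket_bell)

lemma bellprob_enc_True:
  assumes "a < 2^n" "b < 2^n"
  shows "bellprob n (enc n True) a b = (if (a, b) \<in> nz_pairs n then 1 / card (nz_pairs n) else 0)"
proof -
  have "sandwich n (bell n a b) (enc n True) =
      (\<Sum>i\<in>nz_pairs n. if i = (a, b) then 1 else 0) / of_nat (card (nz_pairs n))"
    unfolding enc_True_eq sandwich_divide sandwich_sum
    using assms by (intro arg_cong2[where f="(/)"] sum.cong refl)
      (auto simp: sandwich_proj braket_bell nz_pairs_def split: if_splits)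
  then show ?thesis by (simp add: bellprob_eq_sandwich)
qed

lemma perfectly_correct_code: "n \<ge> 1 \<Longrightarrow> perfectly_correct n"
  unfolding perfectly_correct_def
proof (intro allI ext)
  fix m x
  assume n: "n \<ge> 1"
  have "(\<Sum>(a, b)\<in>nz_pairs n. bellprob n (enc n True) a b) = (\<Sum>i\<in>nz_pairs n. 1 / card (nz_pairs n))"
    by (intro sum.cong refl) (auto simp: bellprob_enc_True mem_nz_pairs)
  also have "\<dots> = 1" using card_nz_pairs_pos[OF n] by (simp add: card_gt_0_iff)
  finally have "(\<Sum>(a, b)\<in>nz_pairs n. bellprob n (enc n True) a b) = 1" .
  moreover have "(\<Sum>(a, b)\<in>nz_pairs n. bellprob n (enc n False) a b) = 0"
    by (intro sum.neutral) (auto simp: bellprob_enc_False mem_nz_pairs)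
  ultimately show "dec_dist n (enc n m) x = (if x = m then 1 else 0)"
    by (cases m) (auto simp: dec_dist_def bellprob_enc_True bellprob_enc_False mem_nz_pairs)
qed

definition op_linear :: "(bop \<Rightarrow> bop) \<Rightarrow> bool" where
  "op_linear \<Phi> \<longleftrightarrow> (\<forall>\<rho>1 \<rho>2. \<Phi> (\<lambda>p q. \<rho>1 p q + \<rho>2 p q) = (\<lambda>p q. \<Phi> \<rho>1 p q + \<Phi> \<rho>2 p q)) \<and>
     (\<forall>c \<rho>. \<Phi> (\<lambda>p q. c * \<rho> p q) = (\<lambda>p q. c * \<Phi> \<rho> p q))"

lemma op_linearI:
  assumes "\<And>\<rho>1 \<rho>2 p q. \<Phi> (\<lambda>p q. \<rho>1 p q + \<rho>2 p q) p q = \<Phi> \<rho>1 p q + \<Phi> \<rho>2 p q"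
    and "\<And>c \<rho> p q. \<Phi> (\<lambda>p q. c * \<rho> p q) p q = c * \<Phi> \<rho> p q"
  shows "op_linear \<Phi>"
  using assms by (simp add: op_linear_def fun_eq_iff)

lemma op_linear_add: "op_linear \<Phi> \<Longrightarrow> \<Phi> (\<lambda>p q. \<rho>1 p q + \<rho>2 p q) = (\<lambda>p q. \<Phi> \<rho>1 p q + \<Phi> \<rho>2 p q)"
  by (simp add: op_linear_def)

lemma op_linear_mult: "op_linear \<Phi> \<Longrightarrow> \<Phi> (\<lambda>p q. c * \<rho> p q) = (\<lambda>p q. c * \<Phi> \<rho> p q)"
  by (simp add: op_linear_def)

lemma op_linear_divide: "op_linear \<Phi> \<Longrightarrow> \<Phi> (\<lambda>p q. \<rho> p q / c) = (\<lambda>p q. \<Phi> \<rho> p q / c)"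
  using op_linear_mult[of \<Phi> "inverse c" \<rho>] by (simp add: field_simps)

lemma op_linear_sum:
  assumes "op_linear \<Phi>" "finite S"
  shows "\<Phi> (\<lambda>p q. \<Sum>i\<in>S. f i p q) = (\<lambda>p q. \<Sum>i\<in>S. \<Phi> (f i) p q)"
  using assms(2)
proof (induction S rule: finite_induct)
  case empty
  show ?case using op_linear_mult[OF assms(1), of 0 "\<lambda>p q. 0"] by simp
next
  case (insert x F)
  then show ?case by (simp add: op_linear_add[OF assms(1)])
qed

lemma op_linear_comp: "op_linear \<Phi> \<Longrightarrow> op_linear \<Psi> \<Longrightarrow> op_linear (\<lambda>\<rho>. \<Phi> (\<Psi> \<rho>))"
  by (simp add: op_linear_def)

lemma op_linear_branches:
  assumes "\<And>k. k < L \<Longrightarrow> op_linear (\<Phi> k)" "\<And>k. k < L \<Longrightarrow> op_linear (F k)"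
  shows "op_linear (\<lambda>\<rho> p q. \<Sum>k<L. \<Phi> k (F k \<rho>) p q)"
proof -
  have "\<Phi> k (F k (\<lambda>p q. \<rho>1 p q + \<rho>2 p q)) p q = \<Phi> k (F k \<rho>1) p q + \<Phi> k (F k \<rho>2) p q"
    "\<Phi> k (F k (\<lambda>p q. c * \<rho> p q)) p q = c * \<Phi> k (F k \<rho>) p q"
    if "k < L" for k \<rho>1 \<rho>2 c \<rho> p q
    using assms[OF that] by (simp_all add: op_linear_add op_linear_mult)
  then show ?thesis
    by (intro op_linearI) (simp_all add: sum.distrib sum_distrib_left)
qed

lemma op_linear_krausA: "op_linear (apply_krausA Ks dA dA' dB)"
proof (rule op_linearI)
  fix \<rho>1 \<rho>2 \<rho> :: bop and c p q
  show "apply_krausA Ks dA dA' dB (\<lambda>p q. \<rho>1 p q + \<rho>2 p q) p q =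
      apply_krausA Ks dA dA' dB \<rho>1 p q + apply_krausA Ks dA dA' dB \<rho>2 p q"
    by (cases p, cases q) (simp add: apply_krausA_def distrib_left distrib_right sum.distrib sum_list_addf)
  have e: "K * (c * r) * z = c * (K * r * z)" for K r z :: complex by (simp add: ac_simps)
  show "apply_krausA Ks dA dA' dB (\<lambda>p q. c * \<rho> p q) p q = c * apply_krausA Ks dA dA' dB \<rho> p q"
    by (cases p, cases q) (simp add: apply_krausA_def e sum_list_const_mult flip: sum_distrib_left)
qed

definition swap_op :: "bop \<Rightarrow> bop" where
  "swap_op \<rho> = (\<lambda>(i, j) (i', j'). \<rho> (j, i) (j', i'))"

lemma op_linear_swap_op: "op_linear swap_op"
  by (intro op_linearI; case_tac p; case_tac q) (simp_all add: swap_op_def)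

lemma krausB_eq_swap_krausA:
  "apply_krausB Ks dA dB dB' \<rho> = swap_op (apply_krausA Ks dB dB' dA (swap_op \<rho>))"
proof (intro ext)
  fix p q :: "nat \<times> nat"
  show "apply_krausB Ks dA dB dB' \<rho> p q = swap_op (apply_krausA Ks dB dB' dA (swap_op \<rho>)) p q"
    by (cases p, cases q) (simp add: apply_krausA_def apply_krausB_def swap_op_def conj_ac)
qed

lemma op_linear_krausB: "op_linear (apply_krausB Ks dA dB dB')"
proof -
  have "op_linear (\<lambda>\<rho>. swap_op (apply_krausA Ks dB dB' dA (swap_op \<rho>)))"
    by (rule op_linear_comp[OF op_linear_swap_op op_linear_comp[OF op_linear_krausA op_linear_swap_op]])
  then show ?thesis by (simp flip: krausB_eq_swap_krausA)
qed

lemma locc_op_linear: "locc dA dB dA' dB' \<Phi> \<Longrightarrow> op_linear \<Phi>"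
proof (induction rule: locc.induct)
  case (locc_id dA dB)
  show ?case by (simp add: op_linear_def)
next
  case (locc_A I dA dA'' dB dA' dB' \<Phi>)
  then show ?case
    by (intro op_linear_branches[where F = "\<lambda>k. apply_krausA (I ! k) dA dA'' dB"] op_linear_krausA) auto
next
  case (locc_B I dB dB'' dA dA' dB' \<Phi>)
  then show ?case
    by (intro op_linear_branches[where F = "\<lambda>k. apply_krausB (I ! k) dA dB dB''"] op_linear_krausB) auto
qed

definition trace2 :: "nat \<Rightarrow> nat \<Rightarrow> bop \<Rightarrow> complex" where
  "trace2 d1 d2 \<rho> = (\<Sum>i<d1. \<Sum>j<d2. \<rho> (i, j) (i, j))"

lemma sum_swap3: "(\<Sum>i\<in>A. \<Sum>x\<in>B. \<Sum>y\<in>C. f i x y) = (\<Sum>x\<in>B. \<Sum>y\<in>C. \<Sum>i\<in>A. f i x y)"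
proof -
  have "(\<Sum>i\<in>A. \<Sum>x\<in>B. \<Sum>y\<in>C. f i x y) = (\<Sum>x\<in>B. \<Sum>i\<in>A. \<Sum>y\<in>C. f i x y)"
    by (rule sum.swap)
  also have "\<dots> = (\<Sum>x\<in>B. \<Sum>y\<in>C. \<Sum>i\<in>A. f i x y)"
    by (intro sum.cong refl) (rule sum.swap)
  finally show ?thesis .
qed

lemma sum_swap4:
  "(\<Sum>a\<in>A. \<Sum>b\<in>B. \<Sum>c\<in>C. \<Sum>d\<in>D. f a b c d) = (\<Sum>c\<in>C. \<Sum>d\<in>D. \<Sum>a\<in>A. \<Sum>b\<in>B. f a b c d)"
proof -
  have "(\<Sum>a\<in>A. \<Sum>b\<in>B. \<Sum>c\<in>C. \<Sum>d\<in>D. f a b c d) = (\<Sum>a\<in>A. \<Sum>c\<in>C. \<Sum>d\<in>D. \<Sum>b\<in>B. f a b c d)"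
    by (rule sum.cong[OF refl], rule sum_swap3)
  also have "\<dots> = (\<Sum>c\<in>C. \<Sum>d\<in>D. \<Sum>a\<in>A. \<Sum>b\<in>B. f a b c d)"
    by (rule sum_swap3)
  finally show ?thesis .
qed

lemma sum_list_sum_swap: "(\<Sum>K\<leftarrow>Ks. \<Sum>x\<in>A. f K x) = (\<Sum>x\<in>A. \<Sum>K\<leftarrow>Ks. f K x)"
  by (induction Ks) (simp_all add: sum.distrib)

lemma sum_list_sum_swap3:
  "(\<Sum>K\<leftarrow>Ks. \<Sum>x\<in>B. \<Sum>y\<in>C. f K x y) = (\<Sum>x\<in>B. \<Sum>y\<in>C. \<Sum>K\<leftarrow>Ks. f K x y)"
proof -
  have "(\<Sum>K\<leftarrow>Ks. \<Sum>x\<in>B. \<Sum>y\<in>C. f K x y) = (\<Sum>x\<in>B. \<Sum>K\<leftarrow>Ks. \<Sum>y\<in>C. f K x y)"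
    by (rule sum_list_sum_swap)
  also have "\<dots> = (\<Sum>x\<in>B. \<Sum>y\<in>C. \<Sum>K\<leftarrow>Ks. f K x y)"
    by (intro sum.cong refl) (rule sum_list_sum_swap)
  finally show ?thesis .
qed

lemma trace2_sum: "trace2 d1 d2 (\<lambda>p q. \<Sum>k\<in>S. f k p q) = (\<Sum>k\<in>S. trace2 d1 d2 (f k))"
  unfolding trace2_def by (rule sum_swap3[symmetric])

lemma trace2_divide: "trace2 d1 d2 (\<lambda>p q. \<sigma> p q / c) = trace2 d1 d2 \<sigma> / c"
  unfolding trace2_def by (simp add: sum_divide_distrib)

lemma trace2_swap_op: "trace2 d1 d2 (swap_op \<rho>) = trace2 d2 d1 \<rho>"
  unfolding trace2_def swap_op_def by (subst sum.swap) simp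

definition kraus_gram :: "kmat list \<Rightarrow> nat \<Rightarrow> nat \<Rightarrow> nat \<Rightarrow> complex" where
  "kraus_gram Ks d' x y = (\<Sum>K\<leftarrow>Ks. \<Sum>i<d'. cnj (K i y) * K i x)"

lemma trace2_krausA: "trace2 dA' dB (apply_krausA Ks dA dA' dB \<rho>) =
    (\<Sum>j<dB. \<Sum>x<dA. \<Sum>y<dA. \<rho> (x, j) (y, j) * kraus_gram Ks dA' x y)"
proof -
  have "trace2 dA' dB (apply_krausA Ks dA dA' dB \<rho>) =
      (\<Sum>j<dB. \<Sum>i<dA'. \<Sum>K\<leftarrow>Ks. \<Sum>x<dA. \<Sum>y<dA. K i x * \<rho> (x, j) (y, j) * cnj (K i y))"
    unfolding trace2_def apply_krausA_def by (subst sum.swap) simp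
  also have "\<dots> = (\<Sum>j<dB. \<Sum>K\<leftarrow>Ks. \<Sum>x<dA. \<Sum>y<dA. \<Sum>i<dA'. K i x * \<rho> (x, j) (y, j) * cnj (K i y))"
    by (intro sum.cong refl, subst sum_list_sum_swap[symmetric])
      (rule arg_cong[where f = sum_list], rule map_cong[OF refl], rule sum_swap3)
  also have "\<dots> = (\<Sum>j<dB. \<Sum>x<dA. \<Sum>y<dA. \<Sum>K\<leftarrow>Ks. \<Sum>i<dA'. K i x * \<rho> (x, j) (y, j) * cnj (K i y))"
    by (intro sum.cong refl) (rule sum_list_sum_swap3)
  also have "\<dots> = (\<Sum>j<dB. \<Sum>x<dA. \<Sum>y<dA. \<rho> (x, j) (y, j) * kraus_gram Ks dA' x y)"
    unfolding kraus_gram_def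
    by (simp add: sum_distrib_left mult.commute mult.left_commute flip: sum_list_const_mult)
  finally show ?thesis .
qed

lemma trace2_krausA_instrument:
  assumes "instrument I dA dA'"
  shows "(\<Sum>k<length I. trace2 dA' dB (apply_krausA (I ! k) dA dA' dB \<rho>)) = trace2 dA dB \<rho>"
proof -
  have gram: "(\<Sum>k<length I. kraus_gram (I ! k) dA' x y) = (if x = y then 1 else 0)"
    if "x < dA" "y < dA" for x y
    using assms that unfolding instrument_def kraus_gram_def
    by (auto simp: sum_list_sum_nth atLeast0LessThan)
  have "(\<Sum>k<length I. trace2 dA' dB (apply_krausA (I ! k) dA dA' dB \<rho>)) =
      (\<Sum>k<length I. \<Sum>j<dB. \<Sum>x<dA. \<Sum>y<dA. \<rho> (x, j) (y, j) * kraus_gram (I ! k) dA' x y)"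
    by (simp only: trace2_krausA)
  also have "\<dots> = (\<Sum>j<dB. \<Sum>x<dA. \<Sum>y<dA. \<Sum>k<length I. \<rho> (x, j) (y, j) * kraus_gram (I ! k) dA' x y)"
    by (rule trans[OF sum.swap], rule sum.cong[OF refl], rule sum_swap3)
  also have "\<dots> = (\<Sum>j<dB. \<Sum>x<dA. \<Sum>y<dA. if x = y then \<rho> (x, j) (y, j) else 0)"
    by (intro sum.cong refl) (simp add: gram flip: sum_distrib_left)
  also have "\<dots> = trace2 dA dB \<rho>"
    unfolding trace2_def by (subst sum.swap) simp
  finally show ?thesis .
qed

lemma trace2_krausB_instrument:
  assumes "instrument I dB dB'"
  shows "(\<Sum>k<length I. trace2 dA dB' (apply_krausB (I ! k) dA dB dB' \<rho>)) = trace2 dA dB \<rho>"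
  using trace2_krausA_instrument[OF assms, of dA "swap_op \<rho>"]
  by (simp add: krausB_eq_swap_krausA trace2_swap_op)

lemma locc_trace2: "locc dA dB dA' dB' \<Phi> \<Longrightarrow> trace2 dA' dB' (\<Phi> \<rho>) = trace2 dA dB \<rho>"
proof (induction arbitrary: \<rho> rule: locc.induct)
  case (locc_A I dA dA'' dB dA' dB' \<Phi>)
  then show ?case by (simp add: trace2_sum trace2_krausA_instrument)
next
  case (locc_B I dB dB'' dA dA' dB' \<Phi>)
  then show ?case by (simp add: trace2_sum trace2_krausB_instrument)
qed simp

section \<open>Operators of bounded Schmidt number\<close>

text \<open>The unnormalised operators \<open>\<Sum>\<^sub>\<psi> |\<psi>\<rangle>\<langle>\<psi>|\<close> with every \<open>\<psi>\<close> of Schmidt rank at most \<open>r\<close>;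
  only the entries inside the \<open>d1 \<times> d2\<close> block are constrained.\<close>
definition schmidt_number_le :: "nat \<Rightarrow> nat \<Rightarrow> nat \<Rightarrow> bop \<Rightarrow> bool" where
  "schmidt_number_le r d1 d2 \<rho> \<longleftrightarrow> (\<exists>vs. (\<forall>\<psi>\<in>set vs. schmidt_rank_le r d1 d2 \<psi>) \<and>
     (\<forall>i j i' j'. i < d1 \<longrightarrow> j < d2 \<longrightarrow> i' < d1 \<longrightarrow> j' < d2 \<longrightarrow>
        \<rho> (i, j) (i', j') = (\<Sum>\<psi>\<leftarrow>vs. \<psi> (i, j) * cnj (\<psi> (i', j')))))"

lemma schmidt_number_le_0: "schmidt_number_le r d1 d2 (\<lambda>p q. 0)"
  unfolding schmidt_number_le_def by (rule exI[of _ "[]"]) simp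

lemma schmidt_number_le_add:
  assumes "schmidt_number_le r d1 d2 \<rho>1" "schmidt_number_le r d1 d2 \<rho>2"
  shows "schmidt_number_le r d1 d2 (\<lambda>p q. \<rho>1 p q + \<rho>2 p q)"
proof -
  obtain vs ws where "\<forall>\<psi>\<in>set vs. schmidt_rank_le r d1 d2 \<psi>" "\<forall>\<psi>\<in>set ws. schmidt_rank_le r d1 d2 \<psi>"
    "\<forall>i j i' j'. i < d1 \<longrightarrow> j < d2 \<longrightarrow> i' < d1 \<longrightarrow> j' < d2 \<longrightarrow>
        \<rho>1 (i, j) (i', j') = (\<Sum>\<psi>\<leftarrow>vs. \<psi> (i, j) * cnj (\<psi> (i', j')))"
    "\<forall>i j i' j'. i < d1 \<longrightarrow> j < d2 \<longrightarrow> i' < d1 \<longrightarrow> j' < d2 \<longrightarrow>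
        \<rho>2 (i, j) (i', j') = (\<Sum>\<psi>\<leftarrow>ws. \<psi> (i, j) * cnj (\<psi> (i', j')))"
    using assms unfolding schmidt_number_le_def by blast
  then show ?thesis
    unfolding schmidt_number_le_def by (intro exI[of _ "vs @ ws"]) auto
qed

lemma schmidt_number_le_sum:
  "(\<And>k. k < (L::nat) \<Longrightarrow> schmidt_number_le r d1 d2 (f k)) \<Longrightarrow>
    schmidt_number_le r d1 d2 (\<lambda>p q. \<Sum>k<L. f k p q)"
  by (induction L) (simp_all add: schmidt_number_le_0 schmidt_number_le_add)

definition local_opA :: "kmat \<Rightarrow> nat \<Rightarrow> bvec \<Rightarrow> bvec" where
  "local_opA K dA \<psi> = (\<lambda>(i, j). \<Sum>x<dA. K i x * \<psi> (x, j))"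

lemma schmidt_rank_le_local_opA:
  assumes "schmidt_rank_le r dA dB \<psi>"
  shows "schmidt_rank_le r dA' dB (local_opA K dA \<psi>)"
proof -
  obtain u v where uv: "\<forall>x<dA. \<forall>y<dB. \<psi> (x, y) = (\<Sum>l<r. u l x * v l y)"
    using assms unfolding schmidt_rank_le_def by blast
  have "local_opA K dA \<psi> (i, y) = (\<Sum>l<r. (\<Sum>x<dA. K i x * u l x) * v l y)" if "y < dB" for i y
    using uv that by (simp add: local_opA_def sum_distrib_left sum_distrib_right mult.assoc sum.swap[of _ "{..<dA}"])
  then show ?thesis unfolding schmidt_rank_le_def
    by (intro exI[of _ "\<lambda>l i. \<Sum>x<dA. K i x * u l x"] exI[of _ v]) simp
qed

lemma sum_list_concat_map:
  "(\<Sum>z\<leftarrow>concat (map (\<lambda>K. map (g K) vs) Ks). f z) = (\<Sum>K\<leftarrow>Ks. \<Sum>\<psi>\<leftarrow>vs. f (g K \<psi>))"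
  by (induction Ks) (simp_all add: comp_def)

lemma schmidt_number_le_krausA:
  assumes "schmidt_number_le r dA dB \<rho>"
  shows "schmidt_number_le r dA' dB (apply_krausA Ks dA dA' dB \<rho>)"
proof -
  obtain vs where vs: "\<forall>\<psi>\<in>set vs. schmidt_rank_le r dA dB \<psi>"
    "\<And>i j i' j'. i < dA \<Longrightarrow> j < dB \<Longrightarrow> i' < dA \<Longrightarrow> j' < dB \<Longrightarrow>
        \<rho> (i, j) (i', j') = (\<Sum>\<psi>\<leftarrow>vs. \<psi> (i, j) * cnj (\<psi> (i', j')))"
    using assms unfolding schmidt_number_le_def by blast
  define ws where "ws = concat (map (\<lambda>K. map (local_opA K dA) vs) Ks)"
  have "\<forall>\<psi>\<in>set ws. schmidt_rank_le r dA' dB \<psi>"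
    unfolding ws_def using vs(1) schmidt_rank_le_local_opA by auto
  moreover have "apply_krausA Ks dA dA' dB \<rho> (i, j) (i', j') = (\<Sum>\<psi>\<leftarrow>ws. \<psi> (i, j) * cnj (\<psi> (i', j')))"
    if "i < dA'" "j < dB" "i' < dA'" "j' < dB" for i j i' j'
  proof -
    have e: "a * (\<Sum>\<psi>\<leftarrow>vs. f \<psi>) * b = (\<Sum>\<psi>\<leftarrow>vs. a * f \<psi> * b)" for a b :: complex and f
      by (simp add: sum_list_const_mult sum_list_mult_const)
    have e2: "a * (p * q) * b = (a * p) * (b * q)" for a b p q :: complex
      by (simp add: ac_simps)
    have "apply_krausA Ks dA dA' dB \<rho> (i, j) (i', j') =
       (\<Sum>K\<leftarrow>Ks. \<Sum>x<dA. \<Sum>y<dA. K i x * (\<Sum>\<psi>\<leftarrow>vs. \<psi> (x, j) * cnj (\<psi> (y, j'))) * cnj (K i' y))"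
      unfolding apply_krausA_def using that vs(2) by simp
    also have "\<dots> = (\<Sum>K\<leftarrow>Ks. \<Sum>x<dA. \<Sum>y<dA. \<Sum>\<psi>\<leftarrow>vs. (K i x * \<psi> (x, j)) * (cnj (K i' y) * cnj (\<psi> (y, j'))))"
      by (simp only: e e2)
    also have "\<dots> = (\<Sum>K\<leftarrow>Ks. \<Sum>\<psi>\<leftarrow>vs. \<Sum>x<dA. \<Sum>y<dA. (K i x * \<psi> (x, j)) * (cnj (K i' y) * cnj (\<psi> (y, j'))))"
      by (simp only: sum_list_sum_swap3)
    also have "\<dots> = (\<Sum>\<psi>\<leftarrow>ws. \<psi> (i, j) * cnj (\<psi> (i', j')))"
      unfolding ws_def sum_list_concat_map local_opA_def by (simp add: sum_product)
    finally show ?thesis .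
  qed
  ultimately show ?thesis unfolding schmidt_number_le_def by blast
qed

definition swap_vec :: "bvec \<Rightarrow> bvec" where
  "swap_vec \<psi> = (\<lambda>(i, j). \<psi> (j, i))"

lemma schmidt_rank_le_swap_vec:
  "schmidt_rank_le r d1 d2 \<psi> \<Longrightarrow> schmidt_rank_le r d2 d1 (swap_vec \<psi>)"
proof -
  assume "schmidt_rank_le r d1 d2 \<psi>"
  then obtain u v where "\<forall>x<d1. \<forall>y<d2. \<psi> (x, y) = (\<Sum>l<r. u l x * v l y)"
    unfolding schmidt_rank_le_def by blast
  then show ?thesis
    unfolding schmidt_rank_le_def swap_vec_def by (intro exI[of _ v] exI[of _ u]) (simp add: mult.commute)
qed

lemma schmidt_number_le_swap_op:
  assumes "schmidt_number_le r d1 d2 \<rho>"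
  shows "schmidt_number_le r d2 d1 (swap_op \<rho>)"
proof -
  obtain vs where "\<forall>\<psi>\<in>set vs. schmidt_rank_le r d1 d2 \<psi>"
    "\<forall>i j i' j'. i < d1 \<longrightarrow> j < d2 \<longrightarrow> i' < d1 \<longrightarrow> j' < d2 \<longrightarrow>
        \<rho> (i, j) (i', j') = (\<Sum>\<psi>\<leftarrow>vs. \<psi> (i, j) * cnj (\<psi> (i', j')))"
    using assms unfolding schmidt_number_le_def by blast
  then show ?thesis
    unfolding schmidt_number_le_def
    by (intro exI[of _ "map swap_vec vs"] conjI)
      (simp_all add: schmidt_rank_le_swap_vec, simp add: swap_op_def swap_vec_def comp_def)
qed

lemma schmidt_number_le_krausB:
  "schmidt_number_le r dA dB \<rho> \<Longrightarrow> schmidt_number_le r dA dB' (apply_krausB Ks dA dB dB' \<rho>)"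
  unfolding krausB_eq_swap_krausA
  by (intro schmidt_number_le_swap_op schmidt_number_le_krausA)

lemma locc_schmidt_number_le:
  "locc dA dB dA' dB' \<Phi> \<Longrightarrow> schmidt_number_le r dA dB \<rho> \<Longrightarrow> schmidt_number_le r dA' dB' (\<Phi> \<rho>)"
proof (induction arbitrary: \<rho> rule: locc.induct)
  case (locc_A I dA dA'' dB dA' dB' \<Phi>)
  then show ?case by (intro schmidt_number_le_sum) (simp add: schmidt_number_le_krausA)
next
  case (locc_B I dB dB'' dA dA' dB' \<Phi>)
  then show ?case by (intro schmidt_number_le_sum) (simp add: schmidt_number_le_krausB)
qed simp

section \<open>Fidelity of low Schmidt rank vectors with the maximally entangled state\<close>

definition cinner :: "nat \<Rightarrow> (nat \<Rightarrow> complex) \<Rightarrow> (nat \<Rightarrow> complex) \<Rightarrow> complex" where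
  "cinner N f g = (\<Sum>x<N. cnj (f x) * g x)"

lemma cnj_cinner: "cnj (cinner N f g) = cinner N g f"
  unfolding cinner_def by (simp add: mult.commute)

lemma cinner_self: "cinner N f f = of_real (\<Sum>x<N. (cmod (f x))\<^sup>2)"
  unfolding cinner_def of_real_sum complex_norm_square by (simp add: mult.commute)

lemma cinner_eq_0_if_self_eq_0: "cinner N f f = 0 \<Longrightarrow> cinner N f g = 0"
  unfolding cinner_self cinner_def of_real_eq_0_iff
  by (simp add: sum_nonneg_eq_0_iff)

lemma cinner_diff_sum:
  "cinner N f (\<lambda>x. g x - (\<Sum>l<r. c l * h l x)) = cinner N f g - (\<Sum>l<r. c l * cinner N f (h l))"
  unfolding cinner_def
  by (simp add: right_diff_distrib sum_subtractf sum_distrib_left sum.swap[of _ "{..<N}"] ac_simps)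

lemma gram_schmidt_step:
  fixes r :: nat
  assumes orth: "\<forall>l<r. \<forall>l'<r. l \<noteq> l' \<longrightarrow> cinner N (q l) (q l') = 0"
  shows "\<exists>c. \<forall>l<r. cinner N (q l) (\<lambda>x. u x - (\<Sum>l'<r. c l' * q l' x)) = 0"
proof (intro exI allI impI)
  fix l assume l: "l < r"
  define c where "c l = cinner N (q l) u / cinner N (q l) (q l)" for l
  have c: "c l * cinner N (q l) (q l) = cinner N (q l) u"
    using cinner_eq_0_if_self_eq_0[of N "q l" u] by (cases "cinner N (q l) (q l) = 0") (auto simp: c_def)
  have "(\<Sum>l'<r. c l' * cinner N (q l) (q l')) =
      (\<Sum>l'<r. if l' = l then c l * cinner N (q l) (q l) else 0)"
    using orth l by (intro sum.cong) auto
  also have "\<dots> = c l * cinner N (q l) (q l)"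
    using l by simp
  finally show "cinner N (q l) (\<lambda>x. u x - (\<Sum>l'<r. c l' * q l' x)) = 0"
    by (simp add: cinner_diff_sum c)
qed

lemma rank_decomp_orthogonal_left:
  fixes u v :: "nat \<Rightarrow> nat \<Rightarrow> complex"
  shows "\<exists>q w. (\<forall>l<r. \<forall>l'<r. l \<noteq> l' \<longrightarrow> cinner N (q l) (q l') = 0) \<and>
    (\<forall>x<N. \<forall>y. (\<Sum>l<r. u l x * v l y) = (\<Sum>l<r. q l x * w l y))"
proof (induction r)
  case (Suc r)
  then obtain q w where orth: "\<forall>l<r. \<forall>l'<r. l \<noteq> l' \<longrightarrow> cinner N (q l) (q l') = 0"
    and decomp: "\<forall>x<N. \<forall>y. (\<Sum>l<r. u l x * v l y) = (\<Sum>l<r. q l x * w l y)"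
    by blast
  obtain c where c: "\<forall>l<r. cinner N (q l) (\<lambda>x. u r x - (\<Sum>l'<r. c l' * q l' x)) = 0"
    using gram_schmidt_step[OF orth] by blast
  define qr where "qr = (\<lambda>x. u r x - (\<Sum>l<r. c l * q l x))"
  define q' where "q' = q(r := qr)"
  define w' where "w' l y = (if l < r then w l y + c l * v r y else v r y)" for l y
  have "cinner N (q' l) (q' l') = 0" if ll': "l < Suc r" "l' < Suc r" "l \<noteq> l'" for l l'
  proof -
    consider "l = r" "l' < r" | "l < r" "l' = r" | "l < r" "l' < r"
      using ll' by (auto simp: less_Suc_eq)
    then show ?thesis
    proof cases
      case 1
      then show ?thesis using c cnj_cinner[of N "q l'" qr] by (simp add: q'_def qr_def)
    next
      case 2
      then show ?thesis using c by (simp add: q'_def qr_def)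
    next
      case 3
      then show ?thesis using orth ll' by (simp add: q'_def)
    qed
  qed
  moreover have "(\<Sum>l<Suc r. u l x * v l y) = (\<Sum>l<Suc r. q' l x * w' l y)" if "x < N" for x y
  proof -
    have "(\<Sum>l<Suc r. q' l x * w' l y) = (\<Sum>l<r. q l x * w l y) + (\<Sum>l<r. c l * q l x) * v r y + qr x * v r y"
      by (simp add: q'_def w'_def distrib_left sum.distrib sum_distrib_left sum_distrib_right ac_simps)
    also have "\<dots> = (\<Sum>l<Suc r. u l x * v l y)"
      using decomp that by (simp add: qr_def algebra_simps)
    finally show ?thesis by simp
  qed
  ultimately show ?case by blast
qed simp

lemma cmod_sum_mult_sq_le:
  "(cmod (\<Sum>x\<in>A. a x * b x))\<^sup>2 \<le> (\<Sum>x\<in>A. (cmod (a x))\<^sup>2) * (\<Sum>x\<in>A. (cmod (b x))\<^sup>2)"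
proof -
  have "(cmod (\<Sum>x\<in>A. a x * b x))\<^sup>2 \<le> (\<Sum>x\<in>A. cmod (a x) * cmod (b x))\<^sup>2"
    by (rule power_mono) (auto intro: order_trans[OF norm_sum] simp: norm_mult)
  also have "\<dots> \<le> (\<Sum>x\<in>A. (cmod (a x))\<^sup>2) * (\<Sum>x\<in>A. (cmod (b x))\<^sup>2)"
    by (rule Cauchy_Schwarz_ineq_sum)
  finally show ?thesis .
qed

lemma norm_sq_orthogonal_decomp:
  fixes r :: nat
  assumes orth: "\<forall>l<r. \<forall>l'<r. l \<noteq> l' \<longrightarrow> cinner N (q l) (q l') = 0"
    and \<psi>: "\<forall>x<N. \<forall>y<N. \<psi> (x, y) = (\<Sum>l<r. q l x * w l y)"
  shows "(\<Sum>x<N. \<Sum>y<N. (cmod (\<psi> (x, y)))\<^sup>2) =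
    (\<Sum>l<r. (\<Sum>x<N. (cmod (q l x))\<^sup>2) * (\<Sum>y<N. (cmod (w l y))\<^sup>2))"
proof -
  have qq: "(\<Sum>x<N. q l x * cnj (q l' x)) = (if l = l' then of_real (\<Sum>x<N. (cmod (q l x))\<^sup>2) else 0)"
    if "l < r" "l' < r" for l l'
    using orth that cinner_self[of N "q l"] unfolding cinner_def by (auto simp: mult.commute)
  have ww: "(\<Sum>y<N. w l y * cnj (w l y)) = of_real (\<Sum>y<N. (cmod (w l y))\<^sup>2)" for l
    unfolding of_real_sum complex_norm_square ..
  have "complex_of_real (\<Sum>x<N. \<Sum>y<N. (cmod (\<psi> (x, y)))\<^sup>2) =
      (\<Sum>x<N. \<Sum>y<N. \<Sum>l<r. \<Sum>l'<r. (q l x * cnj (q l' x)) * (w l y * cnj (w l' y)))"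
    unfolding of_real_sum complex_norm_square using \<psi>
    by (intro sum.cong refl) (simp add: sum_product ac_simps)
  also have "\<dots> = (\<Sum>l<r. \<Sum>l'<r. \<Sum>x<N. \<Sum>y<N. (q l x * cnj (q l' x)) * (w l y * cnj (w l' y)))"
    by (rule sum_swap4)
  also have "\<dots> = (\<Sum>l<r. \<Sum>l'<r. (\<Sum>x<N. q l x * cnj (q l' x)) * (\<Sum>y<N. w l y * cnj (w l' y)))"
    by (simp add: sum_product)
  also have "\<dots> = (\<Sum>l<r. \<Sum>l'<r. if l = l' then
      of_real (\<Sum>x<N. (cmod (q l x))\<^sup>2) * of_real (\<Sum>y<N. (cmod (w l y))\<^sup>2) else 0)"
    by (intro sum.cong refl) (simp add: qq ww)
  also have "\<dots> = complex_of_real (\<Sum>l<r. (\<Sum>x<N. (cmod (q l x))\<^sup>2) * (\<Sum>y<N. (cmod (w l y))\<^sup>2))"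
    by (simp add: of_real_sum)
  finally show ?thesis by (simp only: of_real_eq_iff)
qed

text \<open>This is the bound \<open>|\<langle>\<Phi>|\<psi>\<rangle>|\<^sup>2 \<le> r/N \<parallel>\<psi>\<parallel>\<^sup>2\<close> for the maximally entangled \<open>\<Phi>\<close>:
  Cauchy--Schwarz once across the \<open>r\<close> terms of an orthogonalised Schmidt decomposition
  and once inside each term.\<close>
lemma cmod_diag_sum_sq_le:
  assumes "schmidt_rank_le r N N \<psi>"
  shows "(cmod (\<Sum>x<N. \<psi> (x, x)))\<^sup>2 \<le> real r * (\<Sum>x<N. \<Sum>y<N. (cmod (\<psi> (x, y)))\<^sup>2)"
proof -
  obtain u v where "\<forall>x<N. \<forall>y<N. \<psi> (x, y) = (\<Sum>l<r. u l x * v l y)"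
    using assms unfolding schmidt_rank_le_def by blast
  moreover obtain q w where orth: "\<forall>l<r. \<forall>l'<r. l \<noteq> l' \<longrightarrow> cinner N (q l) (q l') = 0"
    and "\<forall>x<N. \<forall>y. (\<Sum>l<r. u l x * v l y) = (\<Sum>l<r. q l x * w l y)"
    using rank_decomp_orthogonal_left by blast
  ultimately have \<psi>: "\<forall>x<N. \<forall>y<N. \<psi> (x, y) = (\<Sum>l<r. q l x * w l y)" by simp
  define t where "t l = (\<Sum>x<N. q l x * w l x)" for l
  have "(cmod (\<Sum>x<N. \<psi> (x, x)))\<^sup>2 = (cmod (\<Sum>l<r. t l))\<^sup>2"
    using \<psi> unfolding t_def by (simp add: sum.swap[of _ "{..<N}"])
  also have "\<dots> \<le> (\<Sum>l<r. 1 * cmod (t l))\<^sup>2"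
    by (rule power_mono) (auto intro: norm_sum)
  also have "\<dots> \<le> real r * (\<Sum>l<r. (cmod (t l))\<^sup>2)"
    using Cauchy_Schwarz_ineq_sum[of "\<lambda>_. 1" "\<lambda>l. cmod (t l)" "{..<r}"] by simp
  also have "\<dots> \<le> real r * (\<Sum>l<r. (\<Sum>x<N. (cmod (q l x))\<^sup>2) * (\<Sum>y<N. (cmod (w l y))\<^sup>2))"
    unfolding t_def by (intro mult_left_mono sum_mono cmod_sum_mult_sq_le) simp
  also have "\<dots> = real r * (\<Sum>x<N. \<Sum>y<N. (cmod (\<psi> (x, y)))\<^sup>2)"
    by (simp add: norm_sq_orthogonal_decomp[OF orth \<psi>])
  finally show ?thesis .
qed

definition vec_norm2 :: "nat \<Rightarrow> bvec \<Rightarrow> real" where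
  "vec_norm2 n \<psi> = (\<Sum>x<2^n. \<Sum>y<2^n. (cmod (\<psi> (x, y)))\<^sup>2)"

lemma sum_list_of_real': "(\<Sum>x\<leftarrow>xs. complex_of_real (f x)) = of_real (\<Sum>x\<leftarrow>xs. f x)"
  using sum_list_of_real[of "map f xs"] by (simp add: comp_def)

lemma schmidt_number_le_sandwich:
  assumes "schmidt_number_le r (2^n) (2^n) \<sigma>"
  obtains vs where "\<forall>\<psi>\<in>set vs. schmidt_rank_le r (2^n) (2^n) \<psi>"
    "Re (sandwich n \<phi> \<sigma>) = (\<Sum>\<psi>\<leftarrow>vs. (cmod (braket n \<phi> \<psi>))\<^sup>2)"
    "Re (trace2 (2^n) (2^n) \<sigma>) = (\<Sum>\<psi>\<leftarrow>vs. vec_norm2 n \<psi>)"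
proof -
  obtain vs where vs: "\<forall>\<psi>\<in>set vs. schmidt_rank_le r (2^n) (2^n) \<psi>"
    "\<And>i j i' j'. i < 2^n \<Longrightarrow> j < 2^n \<Longrightarrow> i' < 2^n \<Longrightarrow> j' < 2^n \<Longrightarrow>
        \<sigma> (i, j) (i', j') = (\<Sum>\<psi>\<leftarrow>vs. \<psi> (i, j) * cnj (\<psi> (i', j')))"
    using assms unfolding schmidt_number_le_def by blast
  have \<sigma>: "\<sigma> p q = (\<Sum>\<psi>\<leftarrow>vs. \<psi> p * cnj (\<psi> q))" if "p \<in> ket_idx n" "q \<in> ket_idx n" for p q
    using that vs(2) by (cases p, cases q) (auto simp: ket_idx_def)
  have e: "a * (\<Sum>\<psi>\<leftarrow>vs. f \<psi>) * b = (\<Sum>\<psi>\<leftarrow>vs. a * f \<psi> * b)" for a b :: complex and f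
    by (simp add: sum_list_const_mult sum_list_mult_const)
  have e2: "a * (p * q) * b = (a * p) * (q * b)" for a b p q :: complex
    by (simp add: ac_simps)
  have "sandwich n \<phi> \<sigma> =
      (\<Sum>p\<in>ket_idx n. \<Sum>q\<in>ket_idx n. \<Sum>\<psi>\<leftarrow>vs. (cnj (\<phi> p) * \<psi> p) * (cnj (\<psi> q) * \<phi> q))"
    unfolding sandwich_def by (intro sum.cong refl) (simp only: \<sigma> e e2)
  also have "\<dots> = (\<Sum>\<psi>\<leftarrow>vs. \<Sum>p\<in>ket_idx n. \<Sum>q\<in>ket_idx n. (cnj (\<phi> p) * \<psi> p) * (cnj (\<psi> q) * \<phi> q))"
    by (rule sum_list_sum_swap3[symmetric])
  also have "\<dots> = (\<Sum>\<psi>\<leftarrow>vs. of_real ((cmod (braket n \<phi> \<psi>))\<^sup>2))"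
    unfolding complex_norm_square braket_def
    by (simp add: sum_product mult.commute)
  finally have "Re (sandwich n \<phi> \<sigma>) = (\<Sum>\<psi>\<leftarrow>vs. (cmod (braket n \<phi> \<psi>))\<^sup>2)"
    by (simp only: sum_list_of_real' Re_complex_of_real)
  note sandwich_eq = this
  have "trace2 (2^n) (2^n) \<sigma> = (\<Sum>i<2^n. \<Sum>j<2^n. \<Sum>\<psi>\<leftarrow>vs. \<psi> (i, j) * cnj (\<psi> (i, j)))"
    unfolding trace2_def by (intro sum.cong refl) (simp add: vs(2))
  also have "\<dots> = (\<Sum>\<psi>\<leftarrow>vs. of_real (vec_norm2 n \<psi>))"
    unfolding sum_list_sum_swap3[symmetric] vec_norm2_def of_real_sum complex_norm_square ..
  finally have "Re (trace2 (2^n) (2^n) \<sigma>) = (\<Sum>\<psi>\<leftarrow>vs. vec_norm2 n \<psi>)"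
    by (simp only: sum_list_of_real' Re_complex_of_real)
  with sandwich_eq show ?thesis using that vs(1) by blast
qed

lemma sandwich_nonneg: "schmidt_number_le r (2^n) (2^n) \<sigma> \<Longrightarrow> 0 \<le> Re (sandwich n \<phi> \<sigma>)"
  by (rule schmidt_number_le_sandwich[of r n \<sigma> \<phi>]) (auto intro!: sum_list_nonneg)

lemma braket_epr: "braket n (bell n 0 0) \<psi> = (\<Sum>x<2^n. \<psi> (x, x)) / sqrt_dim n"
proof -
  have "braket n (bell n 0 0) \<psi> = (\<Sum>x<2^n. \<Sum>y<2^n. if y = x then \<psi> (x, x) / sqrt_dim n else 0)"
    unfolding braket_def sum_ket_idx by (intro sum.cong refl) (auto simp: bell_eq)
  then show ?thesis by (simp add: sum_divide_distrib)
qed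

lemma epr_fidelity_le:
  assumes "schmidt_number_le r (2^n) (2^n) \<sigma>"
  shows "Re (sandwich n (bell n 0 0) \<sigma>) \<le> real r / 2^n * Re (trace2 (2^n) (2^n) \<sigma>)"
proof -
  obtain vs where vs: "\<forall>\<psi>\<in>set vs. schmidt_rank_le r (2^n) (2^n) \<psi>"
    "Re (sandwich n (bell n 0 0) \<sigma>) = (\<Sum>\<psi>\<leftarrow>vs. (cmod (braket n (bell n 0 0) \<psi>))\<^sup>2)"
    "Re (trace2 (2^n) (2^n) \<sigma>) = (\<Sum>\<psi>\<leftarrow>vs. vec_norm2 n \<psi>)"
    using schmidt_number_le_sandwich[OF assms] by blast
  have each: "(cmod (braket n (bell n 0 0) \<psi>))\<^sup>2 \<le> real r / 2^n * vec_norm2 n \<psi>"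
    if "\<psi> \<in> set vs" for \<psi>
    using cmod_diag_sum_sq_le[of r "2^n" \<psi>] vs(1) that
    by (simp add: braket_epr norm_divide power_divide vec_norm2_def divide_right_mono)
  have "Re (sandwich n (bell n 0 0) \<sigma>) = (\<Sum>\<psi>\<leftarrow>vs. (cmod (braket n (bell n 0 0) \<psi>))\<^sup>2)"
    by (rule vs(2))
  also have "\<dots> \<le> (\<Sum>\<psi>\<leftarrow>vs. real r / 2^n * vec_norm2 n \<psi>)"
    by (rule sum_list_mono) (rule each)
  also have "\<dots> = real r / 2^n * Re (trace2 (2^n) (2^n) \<sigma>)"
    by (simp only: vs(3) sum_list_const_mult)
  finally show ?thesis .
qed

lemma sum_sandwich_bell:
  "(\<Sum>a<2^n. \<Sum>b<2^n. sandwich n (bell n a b) \<sigma>) = trace2 (2^n) (2^n) \<sigma>"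
proof -
  have "(\<Sum>a<2^n. \<Sum>b<2^n. sandwich n (bell n a b) \<sigma>) =
      (\<Sum>p\<in>ket_idx n. \<Sum>q\<in>ket_idx n. \<Sum>a<2^n. \<Sum>b<2^n. cnj (bell n a b p) * \<sigma> p q * bell n a b q)"
    unfolding sandwich_def by (rule sum_swap4)
  also have "\<dots> = (\<Sum>p\<in>ket_idx n. \<Sum>q\<in>ket_idx n. \<sigma> p q * (\<Sum>a<2^n. \<Sum>b<2^n. bell n a b q * cnj (bell n a b p)))"
    by (intro sum.cong refl) (simp add: sum_distrib_left ac_simps)
  also have "\<dots> = (\<Sum>p\<in>ket_idx n. \<Sum>q\<in>ket_idx n. if q = p then \<sigma> p p else 0)"
    by (intro sum.cong refl) (simp add: bell_complete)
  also have "\<dots> = (\<Sum>p\<in>ket_idx n. \<sigma> p p)"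
    by (intro sum.cong refl) simp
  also have "\<dots> = trace2 (2^n) (2^n) \<sigma>"
    by (simp add: trace2_def sum_ket_idx)
  finally show ?thesis .
qed

definition ket :: "nat \<times> nat \<Rightarrow> bvec" where
  "ket i = (\<lambda>p. if p = i then 1 else 0)"

lemma sum_proj_ket:
  "(\<Sum>i\<in>ket_idx n. proj (ket i) p q) = (if p = q \<and> p \<in> ket_idx n then 1 else 0)"
proof -
  have "(\<Sum>i\<in>ket_idx n. proj (ket i) p q) = (\<Sum>i\<in>ket_idx n. if i = p then (if p = q then 1 else 0) else 0)"
    by (intro sum.cong refl) (auto simp: proj_def ket_def)
  then show ?thesis by simp
qed

lemma sum_proj_bell:
  "(\<Sum>i\<in>ket_idx n. proj (bell n (fst i) (snd i)) p q) = (if p = q \<and> p \<in> ket_idx n then 1 else 0)"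
proof (cases "p \<in> ket_idx n \<and> q \<in> ket_idx n")
  case True
  then show ?thesis
    using bell_complete[of p n q] by (simp add: sum_ket_idx proj_def)
next
  case False
  then show ?thesis
    by (auto simp: proj_def bell_eq_0 intro!: sum.neutral)
qed

lemma sum_proj_bell_eq_sum_proj_ket:
  "(\<lambda>p q. \<Sum>i\<in>ket_idx n. proj (bell n (fst i) (snd i)) p q) = (\<lambda>p q. \<Sum>i\<in>ket_idx n. proj (ket i) p q)"
  by (simp add: sum_proj_bell sum_proj_ket)

lemma sum_lessThan_mult: "(\<Sum>i<N * d. g i) = (\<Sum>x<N. \<Sum>a<d. g (x * d + a))"
  for N d :: nat
proof -
  have "(\<Sum>i\<in>{x * d..<x * d + d}. g i) = (\<Sum>a<d. g (x * d + a))" for x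
    using sum.atLeastLessThan_shift_0[of g "x * d" "x * d + d"] by (simp add: atLeast0LessThan comp_def)
  then show ?thesis by (simp add: sum.nat_group[symmetric])
qed

lemma mult_add_less_mult: "x < N \<Longrightarrow> a < d \<Longrightarrow> x * d + a < N * (d::nat)"
proof -
  assume "x < N" "a < d"
  then have "x * d + a < (x + 1) * d" by simp
  also have "\<dots> \<le> N * d" using \<open>x < N\<close> by (intro mult_le_mono1) simp
  finally show ?thesis .
qed

lemma trace2_attach:
  "trace2 (2^n * dEA) (2^n * dEB) (attach n dEA dEB \<omega> \<rho>) = trace2 (2^n) (2^n) \<rho> * trace2 dEA dEB \<omega>"
proof -
  have "trace2 (2^n * dEA) (2^n * dEB) (attach n dEA dEB \<omega> \<rho>) =
      (\<Sum>x<2^n. \<Sum>a<dEA. \<Sum>y<2^n. \<Sum>b<dEB. \<rho> (x, y) (x, y) * \<omega> (a, b) (a, b))"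
    unfolding trace2_def sum_lessThan_mult attach_def by (intro sum.cong refl) (simp add: mult_add_less_mult)
  also have "\<dots> = trace2 (2^n) (2^n) \<rho> * trace2 dEA dEB \<omega>"
    unfolding trace2_def by (simp add: sum_product sum_swap3[of _ "{..<dEA}"] sum.swap[of _ "{..<dEA}"])
  finally show ?thesis .
qed

lemma op_linear_attach: "op_linear (attach n dEA dEB \<omega>)"
  by (intro op_linearI; case_tac p; case_tac q) (simp_all add: attach_def algebra_simps)

lemma resource_stateE:
  assumes "resource_state e dEA dEB \<omega>"
  obtains J :: nat and w :: "nat \<Rightarrow> real" and \<psi> :: "nat \<Rightarrow> bvec"
  where "\<forall>t<J. w t \<ge> 0" "(\<Sum>t<J. w t) = 1"
    "\<forall>t<J. (\<Sum>x<dEA. \<Sum>y<dEB. (cmod (\<psi> t (x, y)))\<^sup>2) = 1"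
    "\<forall>t<J. schmidt_rank_le (2^e) dEA dEB (\<psi> t)"
    "\<forall>p q. \<omega> p q = (\<Sum>t<J. complex_of_real (w t) * proj (\<psi> t) p q)"
  using assms unfolding resource_state_def by blast

lemma trace2_resource: "resource_state e dEA dEB \<omega> \<Longrightarrow> trace2 dEA dEB \<omega> = 1"
proof (erule resource_stateE)
  fix J w and \<psi> :: "nat \<Rightarrow> bvec"
  assume w: "(\<Sum>t<J. w t) = 1" and norm: "\<forall>t<J. (\<Sum>x<dEA. \<Sum>y<dEB. (cmod (\<psi> t (x, y)))\<^sup>2) = 1"
    and \<omega>: "\<forall>p q. \<omega> p q = (\<Sum>t<J. complex_of_real (w t) * proj (\<psi> t) p q)"
  have "trace2 dEA dEB \<omega> =
      (\<Sum>x<dEA. \<Sum>y<dEB. \<Sum>t<J. complex_of_real (w t) * (\<psi> t (x, y) * cnj (\<psi> t (x, y))))"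
    unfolding trace2_def \<omega>[rule_format] proj_def ..
  also have "\<dots> = (\<Sum>t<J. complex_of_real (w t) * (\<Sum>x<dEA. \<Sum>y<dEB. \<psi> t (x, y) * cnj (\<psi> t (x, y))))"
    by (rule trans[OF sum_swap3[symmetric]]) (simp only: sum_distrib_left)
  also have "\<dots> = (\<Sum>t<J. complex_of_real (w t) * of_real (\<Sum>x<dEA. \<Sum>y<dEB. (cmod (\<psi> t (x, y)))\<^sup>2))"
    unfolding of_real_sum complex_norm_square ..
  also have "\<dots> = 1"
    using norm w by (simp flip: of_real_sum)
  finally show ?thesis .
qed

definition attach_vec :: "nat \<Rightarrow> nat \<Rightarrow> bvec \<Rightarrow> real \<Rightarrow> bvec \<Rightarrow> bvec" where
  "attach_vec dEA dEB \<alpha> wt \<psi> =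
    (\<lambda>(i, j). \<alpha> (i div dEA, j div dEB) * complex_of_real (sqrt wt) * \<psi> (i mod dEA, j mod dEB))"

lemma attach_proj_eq:
  assumes \<omega>: "\<forall>p q. \<omega> p q = (\<Sum>t<J. complex_of_real (w t) * proj (\<psi> t) p q)"
    and w: "\<forall>t<J. w t \<ge> 0"
    and "i < 2^n * dEA" "j < 2^n * dEB" "i' < 2^n * dEA" "j' < 2^n * dEB"
  shows "attach n dEA dEB \<omega> (proj \<alpha>) (i, j) (i', j') =
    (\<Sum>\<phi>\<leftarrow>map (\<lambda>t. attach_vec dEA dEB \<alpha> (w t) (\<psi> t)) [0..<J]. \<phi> (i, j) * cnj (\<phi> (i', j')))"
proof -
  have sqrt: "complex_of_real (sqrt (w t)) * complex_of_real (sqrt (w t)) = complex_of_real (w t)"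
    if "t < J" for t
    using w that by (simp flip: of_real_mult)
  have "attach n dEA dEB \<omega> (proj \<alpha>) (i, j) (i', j') =
      (\<Sum>t<J. \<alpha> (i div dEA, j div dEB) * cnj (\<alpha> (i' div dEA, j' div dEB)) *
        (complex_of_real (w t) * (\<psi> t (i mod dEA, j mod dEB) * cnj (\<psi> t (i' mod dEA, j' mod dEB)))))"
    using assms(3-6) by (simp add: attach_def \<omega>[rule_format] proj_def sum_distrib_left)
  also have "\<dots> = (\<Sum>t<J. attach_vec dEA dEB \<alpha> (w t) (\<psi> t) (i, j) *
      cnj (attach_vec dEA dEB \<alpha> (w t) (\<psi> t) (i', j')))"
    by (intro sum.cong refl) (simp add: attach_vec_def flip: sqrt)
  also have "\<dots> = (\<Sum>\<phi>\<leftarrow>map (\<lambda>t. attach_vec dEA dEB \<alpha> (w t) (\<psi> t)) [0..<J]. \<phi> (i, j) * cnj (\<phi> (i', j')))"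
    by (simp add: sum_list_distinct_conv_sum_set atLeast0LessThan comp_def)
  finally show ?thesis .
qed

lemma schmidt_number_le_attach:
  assumes "resource_state e dEA dEB \<omega>"
    and rank: "\<And>w \<psi>. schmidt_rank_le (2^e) dEA dEB \<psi> \<Longrightarrow>
      schmidt_rank_le r (2^n * dEA) (2^n * dEB) (attach_vec dEA dEB \<alpha> w \<psi>)"
  shows "schmidt_number_le r (2^n * dEA) (2^n * dEB) (attach n dEA dEB \<omega> (proj \<alpha>))"
proof (rule resource_stateE[OF assms(1)])
  fix J w and \<psi> :: "nat \<Rightarrow> bvec"
  assume w: "\<forall>t<J. w t \<ge> 0" and \<psi>: "\<forall>t<J. schmidt_rank_le (2^e) dEA dEB (\<psi> t)"
    and \<omega>: "\<forall>p q. \<omega> p q = (\<Sum>t<J. complex_of_real (w t) * proj (\<psi> t) p q)"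
  show ?thesis
    unfolding schmidt_number_le_def
    by (intro exI[of _ "map (\<lambda>t. attach_vec dEA dEB \<alpha> (w t) (\<psi> t)) [0..<J]"] conjI allI impI)
      (use \<psi> rank attach_proj_eq[OF \<omega> w] in auto)
qed

lemma schmidt_rank_le_triv: "schmidt_rank_le d1 d1 d2 \<psi>"
proof -
  have \<psi>: "\<psi> (x, y) = (\<Sum>l<d1. (if l = x then 1 else 0) * \<psi> (l, y))" if "x < d1" for x y
    using that by (simp add: if_distrib[of "\<lambda>c. c * _"] cong: if_cong)
  show ?thesis
    unfolding schmidt_rank_le_def
    by (rule exI[of _ "\<lambda>l x. if l = x then 1 else 0"], rule exI[of _ "\<lambda>l y. \<psi> (l, y)"])
      (simp add: \<psi>)
qed

lemma schmidt_rank_le_attach_vec_product: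
  assumes "schmidt_rank_le s dEA dEB \<psi>" and \<alpha>: "\<forall>x<2^n. \<forall>y<2^n. \<alpha> (x, y) = a x * b y"
  shows "schmidt_rank_le s (2^n * dEA) (2^n * dEB) (attach_vec dEA dEB \<alpha> w \<psi>)"
proof -
  obtain u v where uv: "\<forall>x<dEA. \<forall>y<dEB. \<psi> (x, y) = (\<Sum>l<s. u l x * v l y)"
    using assms(1) unfolding schmidt_rank_le_def by blast
  have vec: "attach_vec dEA dEB \<alpha> w \<psi> (i, j) =
      (\<Sum>l<s. (a (i div dEA) * complex_of_real (sqrt w) * u l (i mod dEA)) * (b (j div dEB) * v l (j mod dEB)))"
    if "i < 2^n * dEA" "j < 2^n * dEB" for i j
  proof -
    have "0 < dEA" "0 < dEB"
      using that by (auto intro: gr0I)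
    then have "i div dEA < 2^n" "j div dEB < 2^n" "i mod dEA < dEA" "j mod dEB < dEB"
      using that by (auto simp: less_mult_imp_div_less mult.commute)
    then show ?thesis
      using \<alpha> uv by (simp add: attach_vec_def sum_distrib_left ac_simps)
  qed
  show ?thesis
    unfolding schmidt_rank_le_def
    by (rule exI[of _ "\<lambda>l i. a (i div dEA) * complex_of_real (sqrt w) * u l (i mod dEA)"],
        rule exI[of _ "\<lambda>l j. b (j div dEB) * v l (j mod dEB)"]) (simp add: vec)
qed

section \<open>Non-malleability against bounded-entanglement LOCC\<close>

lemma trace2_proj: "trace2 (2^n) (2^n) (proj \<psi>) = braket n \<psi> \<psi>"
  unfolding trace2_def proj_def braket_def sum_ket_idx by (simp add: mult.commute)

lemma braket_ket: "i \<in> ket_idx n \<Longrightarrow> braket n (ket i) (ket i) = 1"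
proof -
  have "cnj (ket i p) * ket i p = (if p = i then 1 else 0)" for p
    by (simp add: ket_def)
  then show "i \<in> ket_idx n \<Longrightarrow> braket n (ket i) (ket i) = 1"
    by (simp add: braket_def)
qed

lemma enc_False_eq: "enc n False = proj (bell n 0 0)"
  by (simp add: enc_def epr_n_eq_bell)

lemma trace2_enc: "n \<ge> 1 \<Longrightarrow> trace2 (2^n) (2^n) (enc n m) = 1"
proof -
  assume "n \<ge> 1"
  have "trace2 (2^n) (2^n) (proj (bell n (fst i) (snd i))) = 1" if "i \<in> nz_pairs n" for i
    using that by (cases i) (simp add: trace2_proj braket_bell mem_nz_pairs)
  then show ?thesis
    using card_nz_pairs_pos[OF \<open>n \<ge> 1\<close>]
    by (cases m) (simp_all add: enc_True_eq enc_False_eq trace2_divide trace2_sum trace2_proj braket_bell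
        card_gt_0_iff)
qed

lemma mult_div_sq_minus_one_le:
  fixes X K :: real
  assumes "2 \<le> X" "0 \<le> K"
  shows "X * K / (X * X - 1) \<le> 2 * K / X"
proof -
  have "2 * 2 \<le> X * X" using assms(1) by (intro mult_mono) auto
  then have "2 * K \<le> K * (X * X)" using assms(2) mult_left_mono[of 2 "X * X" K] by simp
  then show ?thesis using assms \<open>2 * 2 \<le> X * X\<close> by (simp add: field_simps)
qed

lemma sum_ket_idx_split: "(\<Sum>i\<in>ket_idx n. f i) = f (0, 0) + (\<Sum>i\<in>nz_pairs n. f i)"
  unfolding nz_pairs_eq by (rule sum.remove) (auto simp: ket_idx_def)

lemma binary_channel_near_keep_or_sample:
  assumes "is_dist (P False)" "is_dist (P True)" "P True False \<le> \<epsilon>"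
  shows "\<exists>p D. 0 \<le> p \<and> p \<le> 1 \<and> is_dist D \<and>
    (\<forall>m. stat_dist (P m) (\<lambda>x. p * (if x = m then 1 else 0) + (1 - p) * D x) \<le> \<epsilon>)"
proof -
  define r0 s0 r1 s1 where "r0 = P False False" "s0 = P False True" "r1 = P True False" "s1 = P True True"
  have P: "P False x = (if x then s0 else r0)" "P True x = (if x then s1 else r1)" for x
    by (cases x; simp add: r0_s0_r1_s1_def)+
  have dist: "0 \<le> r0" "0 \<le> s0" "0 \<le> r1" "0 \<le> s1" "r0 + s0 = 1" "r1 + s1 = 1"
    using assms(1,2) by (simp_all add: is_dist_def r0_s0_r1_s1_def)
  have eps: "r1 \<le> \<epsilon>"
    using assms(3) by (simp add: r0_s0_r1_s1_def)
  show ?thesis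
  proof (cases "r1 \<le> r0")
    case True
    \<comment> \<open>keep with probability \<open>r0 - r1\<close>; the remaining mass \<open>(r1, s0)\<close> is the same for both inputs\<close>
    define p where "p = r0 - r1"
    define D where "D x = (if s0 + r1 = 0 then (if x then 0 else 1) else (if x then s0 else r1) / (s0 + r1))"
      for x
    have D: "is_dist D"
      using dist by (auto simp: is_dist_def D_def add_divide_distrib[symmetric])
    have exact: "stat_dist (P m) (\<lambda>x. p * (if x = m then 1 else 0) + (1 - p) * D x) = 0" for m
    proof (cases "s0 + r1 = 0")
      case True
      then have "s0 = 0" "r1 = 0" using dist by auto
      then show ?thesis using dist by (cases m) (auto simp: stat_dist_def D_def p_def P)
    next
      case False
      have "1 - p = s0 + r1" using dist by (simp add: p_def)
      then have "(1 - p) * D False = r1" "(1 - p) * D True = s0" using False by (auto simp: D_def)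
      then show ?thesis using dist by (cases m) (auto simp: stat_dist_def p_def P)
    qed
    have "0 \<le> p" "p \<le> 1" using True dist by (auto simp: p_def)
    moreover have "0 \<le> \<epsilon>" using eps dist(3) by linarith
    ultimately show ?thesis using D exact by (metis order_refl)
  next
    case False
    have "stat_dist (P m) (\<lambda>x. 0 * (if x = m then 1 else 0) + (1 - 0) * P False x) \<le> \<epsilon>" for m
      using eps dist False by (cases m) (auto simp: stat_dist_def P)
    then show ?thesis using assms(1) by (intro exI[of _ "0::real"] exI[of _ "P False"]) auto
  qed
qed

context
  fixes n e dEA dEB :: nat and \<omega> :: bop and \<Phi> :: "bop \<Rightarrow> bop"
  assumes resource: "resource_state e dEA dEB \<omega>"
    and protocol: "locc (2^n * dEA) (2^n * dEB) (2^n) (2^n) \<Phi>"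
begin

abbreviation tamper :: "bop \<Rightarrow> bop" where
  "tamper \<rho> \<equiv> \<Phi> (attach n dEA dEB \<omega> \<rho>)"

lemma op_linear_tamper: "op_linear tamper"
  by (rule op_linear_comp[OF locc_op_linear[OF protocol] op_linear_attach])

lemma trace2_tamper: "trace2 (2^n) (2^n) (tamper \<rho>) = trace2 (2^n) (2^n) \<rho>"
  by (simp add: locc_trace2[OF protocol] trace2_attach trace2_resource[OF resource])

lemma sandwich_tamper_proj_nonneg: "0 \<le> Re (sandwich n \<phi> (tamper (proj \<alpha>)))"
  by (intro sandwich_nonneg[where r = "2^n * dEA"] locc_schmidt_number_le[OF protocol]
      schmidt_number_le_attach[OF resource] schmidt_rank_le_triv)

lemma epr_fidelity_tamper_ket:
  assumes "i \<in> ket_idx n"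
  shows "Re (sandwich n (bell n 0 0) (tamper (proj (ket i)))) \<le> 2^e / 2^n"
proof -
  obtain x y where i: "i = (x, y)" by (cases i)
  have "\<forall>x'<2^n. \<forall>y'<2^n. ket i (x', y') = (if x' = x then 1 else 0) * (if y' = y then 1 else 0)"
    by (simp add: ket_def i)
  then have "schmidt_number_le (2^e) (2^n) (2^n) (tamper (proj (ket i)))"
    by (intro locc_schmidt_number_le[OF protocol] schmidt_number_le_attach[OF resource]
        schmidt_rank_le_attach_vec_product)
  from epr_fidelity_le[OF this] show ?thesis
    using assms by (simp add: trace2_tamper trace2_proj braket_ket)
qed

lemma sandwich_tamper_enc_True: "sandwich n \<phi> (tamper (enc n True)) =
    (\<Sum>i\<in>nz_pairs n. sandwich n \<phi> (tamper (proj (bell n (fst i) (snd i))))) / card (nz_pairs n)"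
  by (simp add: enc_True_eq op_linear_divide[OF op_linear_tamper] op_linear_sum[OF op_linear_tamper]
      sandwich_divide sandwich_sum)

lemma bellprob_tamper_enc_nonneg: "0 \<le> bellprob n (tamper (enc n m)) a b"
proof (cases m)
  case True
  then show ?thesis
    by (simp add: bellprob_eq_sandwich sandwich_tamper_enc_True sandwich_tamper_proj_nonneg sum_nonneg)
qed (simp add: bellprob_eq_sandwich enc_False_eq sandwich_tamper_proj_nonneg)

lemma is_dist_dec_tamper_enc:
  assumes "n \<ge> 1"
  shows "is_dist (dec_dist n (tamper (enc n m)))"
proof -
  have "dec_dist n (tamper (enc n m)) False + dec_dist n (tamper (enc n m)) True =
      (\<Sum>i\<in>ket_idx n. bellprob n (tamper (enc n m)) (fst i) (snd i))"
    unfolding sum_ket_idx_split by (simp add: dec_dist_def case_prod_beta)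
  also have "\<dots> = Re (\<Sum>a<2^n. \<Sum>b<2^n. sandwich n (bell n a b) (tamper (enc n m)))"
    by (simp add: sum_ket_idx bellprob_eq_sandwich)
  also have "\<dots> = 1"
    by (simp add: sum_sandwich_bell trace2_tamper trace2_enc[OF assms])
  finally show ?thesis
    unfolding is_dist_def dec_dist_def
    by (auto simp: bellprob_tamper_enc_nonneg case_prod_beta intro!: sum_nonneg)
qed

text \<open>Summed over all \<open>4\<^sup>n\<close> Bell inputs the tampered state still overlaps \<open>|\<Phi>\<rangle>\<^sup>\<otimes>\<^sup>n\<close> by at most
  \<open>2\<^sup>n 2\<^sup>e\<close>: the Bell projectors add up to the same operator as the product projectors.\<close>
lemma sum_epr_fidelity_tamper_bell:
  "(\<Sum>i\<in>ket_idx n. Re (sandwich n (bell n 0 0) (tamper (proj (bell n (fst i) (snd i)))))) \<le> 2^n * 2^e"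
proof -
  have "(\<Sum>i\<in>ket_idx n. Re (sandwich n (bell n 0 0) (tamper (proj (bell n (fst i) (snd i)))))) =
      Re (sandwich n (bell n 0 0) (tamper (\<lambda>p q. \<Sum>i\<in>ket_idx n. proj (bell n (fst i) (snd i)) p q)))"
    by (simp add: op_linear_sum[OF op_linear_tamper] sandwich_sum)
  also have "\<dots> = (\<Sum>i\<in>ket_idx n. Re (sandwich n (bell n 0 0) (tamper (proj (ket i)))))"
    by (simp add: sum_proj_bell_eq_sum_proj_ket op_linear_sum[OF op_linear_tamper] sandwich_sum)
  also have "\<dots> \<le> (\<Sum>i\<in>ket_idx n. 2^e / 2^n)"
    by (rule sum_mono) (rule epr_fidelity_tamper_ket)
  also have "\<dots> = 2^n * 2^e"
    by (simp add: card_ket_idx)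
  finally show ?thesis .
qed

lemma dec_dist_tamper_enc_True_False_le:
  assumes "n \<ge> 1"
  shows "dec_dist n (tamper (enc n True)) False \<le> 2 powr (1 + real e - real n)"
proof -
  define G where "G i = Re (sandwich n (bell n 0 0) (tamper (proj (bell n (fst i) (snd i)))))" for i
  have "(\<Sum>i\<in>nz_pairs n. G i) \<le> G (0, 0) + (\<Sum>i\<in>nz_pairs n. G i)"
    by (simp add: G_def sandwich_tamper_proj_nonneg)
  also have "\<dots> \<le> 2^n * 2^e"
    using sum_epr_fidelity_tamper_bell by (simp add: G_def sum_ket_idx_split)
  finally have sum_G: "(\<Sum>i\<in>nz_pairs n. G i) \<le> 2^n * 2^e" .
  have "(1::real) * 1 \<le> 2^n * 2^n"
    by (intro mult_mono) simp_all
  then have "dec_dist n (tamper (enc n True)) False = (\<Sum>i\<in>nz_pairs n. G i) / (2^n * 2^n - 1)"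
    by (simp add: dec_dist_def bellprob_eq_sandwich sandwich_tamper_enc_True G_def card_nz_pairs
        of_nat_diff)
  also have "\<dots> \<le> 2^n * 2^e / (2^n * 2^n - 1)"
    using \<open>1 * 1 \<le> _\<close> by (intro divide_right_mono[OF sum_G]) simp
  also have "\<dots> \<le> 2 * 2^e / 2^n"
    using assms by (intro mult_div_sq_minus_one_le) (auto simp: self_le_power)
  also have "\<dots> = 2 powr (1 + real e - real n)"
    by (simp add: powr_add powr_diff powr_realpow)
  finally show ?thesis .
qed

end

theorem theorem6p1:
  fixes n e :: nat
  assumes "n \<ge> 1"
  shows "perfectly_correct n \<and> non_malleable n (LOCC2 n e) (2 powr (1 + real e - real n))"
proof
  show "perfectly_correct n"
    by (rule perfectly_correct_code[OF assms])
  show "non_malleable n (LOCC2 n e) (2 powr (1 + real e - real n))"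
    unfolding non_malleable_def
  proof
    fix \<Lambda> assume "\<Lambda> \<in> LOCC2 n e"
    then obtain dEA dEB \<omega> \<Phi> where resource: "resource_state e dEA dEB \<omega>"
      and protocol: "locc (2^n * dEA) (2^n * dEB) (2^n) (2^n) \<Phi>"
      and \<Lambda>: "\<Lambda> = (\<lambda>\<rho>. \<Phi> (attach n dEA dEB \<omega> \<rho>))"
      unfolding LOCC2_def by blast
    show "\<exists>p D. 0 \<le> p \<and> p \<le> 1 \<and> is_dist D \<and> (\<forall>m. stat_dist (dec_dist n (\<Lambda> (enc n m)))
        (\<lambda>x. p * (if x = m then 1 else 0) + (1 - p) * D x) \<le> 2 powr (1 + real e - real n))"
      unfolding \<Lambda> using assms
      by (intro binary_channel_near_keep_or_sample is_dist_dec_tamper_enc[OF resource protocol]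
          dec_dist_tamper_enc_True_False_le[OF resource protocol])
  qed
qed

end
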